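(* Every implication algebra $\mathfrak{A}=(A,\to)$ with $A$ finite has a finite representation, i.e. there is an injective map $h$ from $A$ into $\wp(\top)$ for some binary relation $\top\subseteq X\times X$ with $X$ finite, such that $h(a\to b)=(\top\setminus h(a))\cup h(b)$ for all $a,b\in A$.
   Context: An implication algebra is $(A,\to)$ satisfying, for all $a,b,c$: $(a\to b)\to a=a$; $(a\to b)\to b=(b\to a)\to a$; $a\to(b\to c)=b\to(a\to c)$. *)

theory Defs
  imports Main
begin

definition implication_algebra :: "'a set \<Rightarrow> ('a \<Rightarrow> 'a \<Rightarrow> 'a) \<Rightarrow> bool" where
  "implication_algebra A imp \<longleftrightarrow>
     (\<forall>a\<in>A. \<forall>b\<in>A. imp a b \<in> A) \<and>
     (\<forall>a\<in>A. \<forall>b\<in>A. imp (imp a b) a = a) \<and>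
     (\<forall>a\<in>A. \<forall>b\<in>A. imp (imp a b) b = imp (imp b a) a) \<and>
     (\<forall>a\<in>A. \<forall>b\<in>A. \<forall>c\<in>A. imp a (imp b c) = imp b (imp a c))"

definition has_finite_representation :: "'a set \<Rightarrow> ('a \<Rightarrow> 'a \<Rightarrow> 'a) \<Rightarrow> bool" where
  "has_finite_representation A imp \<longleftrightarrow>
     (\<exists>(X :: nat set) (T :: (nat \<times> nat) set) (h :: 'a \<Rightarrow> (nat \<times> nat) set).
        finite X \<and> T \<subseteq> X \<times> X \<and> inj_on h A \<and> (\<forall>a\<in>A. h a \<subseteq> T) \<and>
        (\<forall>a\<in>A. \<forall>b\<in>A. h (imp a b) = (T - h a) \<union> h b))"

end

theory Submission
  imports Defs
begin

(* Put x \<sqsubseteq> y iff x \<rightarrow> y = 1, where 1 = x \<rightarrow> x is the same for all x. This is a partial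
   order in which (x \<rightarrow> y) \<rightarrow> y is the join of x and y. If a is not below b, an element m
   maximal among those above b but not above a is a point: x \<mapsto> (x is not below m) is a
   homomorphism onto the two-element implication algebra, because every proper upper bound of m
   lies above a. In a finite algebra such an m always exists, so x \<mapsto> {points m. x is not below m}
   is injective and turns \<rightarrow> into relative complement-union on the finite set of points. *)

locale imp_algebra =
  fixes A :: "'a set" and imp :: "'a \<Rightarrow> 'a \<Rightarrow> 'a"
  assumes imp_closed: "a \<in> A \<Longrightarrow> b \<in> A \<Longrightarrow> imp a b \<in> A"
    and imp_absorb: "a \<in> A \<Longrightarrow> b \<in> A \<Longrightarrow> imp (imp a b) a = a"
    and imp_comm: "a \<in> A \<Longrightarrow> b \<in> A \<Longrightarrow> imp (imp a b) b = imp (imp b a) a"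
    and imp_exchange: "a \<in> A \<Longrightarrow> b \<in> A \<Longrightarrow> c \<in> A \<Longrightarrow> imp a (imp b c) = imp b (imp a c)"
begin

lemma imp_contract: "x \<in> A \<Longrightarrow> y \<in> A \<Longrightarrow> imp x (imp x y) = imp x y"
  using imp_absorb[of "imp x y" x] imp_absorb[of x y] imp_closed by simp

lemma imp_self_eq_imp_self_imp: "x \<in> A \<Longrightarrow> y \<in> A \<Longrightarrow> imp x x = imp (imp x y) (imp x y)"
proof -
  assume xy: "x \<in> A" "y \<in> A"
  have "imp x x = imp (imp (imp x y) x) x" using xy imp_absorb by simp
  also have "\<dots> = imp (imp x (imp x y)) (imp x y)" using xy imp_comm[of "imp x y" x] imp_closed by simp
  also have "\<dots> = imp (imp x y) (imp x y)" using xy imp_contract by simp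
  finally show ?thesis .
qed

lemma imp_self_eq: "x \<in> A \<Longrightarrow> y \<in> A \<Longrightarrow> imp x x = imp y y"
proof -
  assume xy: "x \<in> A" "y \<in> A"
  define u where "u = imp x (imp y x)"
  have "imp x x = imp u u"
    unfolding u_def using xy imp_closed by (intro imp_self_eq_imp_self_imp) simp_all
  also have "u = imp y (imp x x)" unfolding u_def using xy imp_exchange by simp
  also have "imp \<dots> \<dots> = imp y y"
    using xy imp_closed by (intro imp_self_eq_imp_self_imp[symmetric]) simp_all
  finally show ?thesis .
qed

lemma imp_to_self: "x \<in> A \<Longrightarrow> y \<in> A \<Longrightarrow> imp y (imp x x) = imp x x"
  using imp_self_eq[of x y] imp_contract[of y y] by simp

lemma imp_self_imp: "x \<in> A \<Longrightarrow> y \<in> A \<Longrightarrow> imp (imp y y) x = x"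
  using imp_self_eq[of y x] imp_absorb[of x x] by simp

definition below :: "'a \<Rightarrow> 'a \<Rightarrow> bool" (infix "\<sqsubseteq>" 50)
  where "x \<sqsubseteq> y \<longleftrightarrow> imp x y = imp x x"

lemma below_refl: "x \<sqsubseteq> x"
  by (simp add: below_def)

lemma below_top: "x \<in> A \<Longrightarrow> y \<in> A \<Longrightarrow> x \<sqsubseteq> imp y y"
  unfolding below_def using imp_to_self[of y x] imp_self_eq[of y x] by simp

lemma top_below: "x \<in> A \<Longrightarrow> y \<in> A \<Longrightarrow> imp y y \<sqsubseteq> x \<Longrightarrow> x = imp y y"
  unfolding below_def using imp_self_imp[of x y] imp_self_imp[of "imp y y" y] imp_closed by simp

lemma below_join_eq: "x \<in> A \<Longrightarrow> y \<in> A \<Longrightarrow> x \<sqsubseteq> y \<Longrightarrow> imp (imp y x) x = y"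
  unfolding below_def using imp_comm[of y x] imp_self_imp[of y x] by simp

lemma below_antisym: "x \<in> A \<Longrightarrow> y \<in> A \<Longrightarrow> x \<sqsubseteq> y \<Longrightarrow> y \<sqsubseteq> x \<Longrightarrow> x = y"
  using below_join_eq[of x y] imp_self_imp[of x y] unfolding below_def by simp

lemma below_trans:
  assumes A: "x \<in> A" "y \<in> A" "z \<in> A" and "x \<sqsubseteq> y" "y \<sqsubseteq> z"
  shows "x \<sqsubseteq> z"
proof -
  have "imp x z = imp x (imp (imp z y) y)" using assms below_join_eq[of y z] by simp
  also have "\<dots> = imp (imp z y) (imp x y)" using A imp_closed imp_exchange by simp
  also have "\<dots> = imp x x"
    using assms imp_closed imp_to_self[of x "imp z y"] unfolding below_def by simp
  finally show ?thesis unfolding below_def .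
qed

lemma below_imp: "x \<in> A \<Longrightarrow> y \<in> A \<Longrightarrow> y \<sqsubseteq> imp x y"
  unfolding below_def using imp_exchange[of y x y] imp_to_self[of y x] by simp

lemma below_imp_imp: "x \<in> A \<Longrightarrow> y \<in> A \<Longrightarrow> x \<sqsubseteq> imp (imp x y) y"
  unfolding below_def
  using imp_exchange[of x "imp x y" y] imp_closed imp_self_eq[of "imp x y" x] by simp

lemma below_imp_iff: "x \<in> A \<Longrightarrow> y \<in> A \<Longrightarrow> z \<in> A \<Longrightarrow> x \<sqsubseteq> imp y z \<longleftrightarrow> y \<sqsubseteq> imp x z"
  unfolding below_def using imp_exchange[of x y z] imp_self_eq[of x y] by auto

lemma imp_mono:
  assumes A: "x \<in> A" "y \<in> A" "z \<in> A" and "x \<sqsubseteq> y"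
  shows "imp z x \<sqsubseteq> imp z y"
proof -
  have "imp (imp z x) (imp z y) = imp (imp z x) (imp z (imp (imp y x) x))"
    using assms below_join_eq[of x y] by simp
  also have "\<dots> = imp (imp y x) (imp (imp z x) (imp z x))"
    using A imp_closed imp_exchange by simp
  also have "\<dots> = imp (imp z x) (imp z x)"
    using A imp_closed imp_to_self[of "imp z x" "imp y x"] by simp
  finally show ?thesis unfolding below_def .
qed

lemma imp_antimono:
  assumes A: "x \<in> A" "y \<in> A" "z \<in> A" and "x \<sqsubseteq> y"
  shows "imp y z \<sqsubseteq> imp x z"
proof -
  have "x \<sqsubseteq> imp (imp y z) z"
    using assms below_imp_imp[of y z] below_trans[of x y "imp (imp y z) z"] imp_closed by simp
  then show ?thesis using A below_imp_iff imp_closed by blast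
qed

lemma imp_imp_imp_eq: "x \<in> A \<Longrightarrow> y \<in> A \<Longrightarrow> imp (imp (imp x y) y) y = imp x y"
  using below_antisym below_imp_imp[of "imp x y" y] imp_antimono[OF _ _ _ below_imp_imp, of x y y]
    imp_closed by simp

lemma join_least:
  assumes A: "x \<in> A" "y \<in> A" "z \<in> A" and "x \<sqsubseteq> z" "y \<sqsubseteq> z"
  shows "imp (imp x y) y \<sqsubseteq> z"
proof -
  have "imp (imp (imp x y) y) z = imp (imp (imp x y) y) (imp (imp z x) x)"
    using assms below_join_eq[of x z] by simp
  also have "\<dots> = imp (imp z x) (imp (imp (imp x y) y) x)"
    using A imp_closed imp_exchange by simp
  also have "imp (imp (imp x y) y) x = imp y x"
    using A imp_comm[of x y] imp_imp_imp_eq[of y x] by simp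
  also have "imp (imp z x) (imp y x) = imp (imp (imp x y) y) (imp (imp x y) y)"
    using assms imp_antimono[of y z x] imp_closed imp_self_eq[of "imp z x" "imp (imp x y) y"]
    unfolding below_def by simp
  finally show ?thesis unfolding below_def .
qed

definition bool_point :: "'a \<Rightarrow> bool"
  where "bool_point m \<longleftrightarrow> m \<in> A \<and>
    (\<forall>x\<in>A. \<forall>y\<in>A. imp x y \<sqsubseteq> m \<longleftrightarrow> \<not> x \<sqsubseteq> m \<and> y \<sqsubseteq> m)"

lemma top_if_below_and_imp_below:
  assumes xA: "x \<in> A" and yA: "y \<in> A" and mA: "m \<in> A"
    and "x \<sqsubseteq> m" and "imp x y \<sqsubseteq> m"
  shows "m = imp x x"
proof -
  have xyA: "imp x y \<in> A" using imp_closed xA yA by simp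
  have "imp (imp x (imp x y)) (imp x y) \<sqsubseteq> m"
    using join_least[OF xA xyA mA] assms by blast
  then have "imp x x \<sqsubseteq> m"
    using imp_contract[OF xA yA] imp_self_eq[OF xA xyA] by simp
  then show ?thesis using top_below[OF mA xA] by blast
qed

lemma imp_eq_if_maximal:
  assumes aA: "a \<in> A" and mA: "m \<in> A" and xA: "x \<in> A" and a_m: "\<not> a \<sqsubseteq> m"
    and maximal: "\<And>z. z \<in> A \<Longrightarrow> m \<sqsubseteq> z \<Longrightarrow> z \<noteq> m \<Longrightarrow> a \<sqsubseteq> z"
    and x_m: "\<not> x \<sqsubseteq> m"
  shows "imp x m = m"
proof (rule ccontr)
  \<comment> \<open>otherwise both x \<rightarrow> m and the join of m and x are proper upper bounds of m\<close>
  assume "imp x m \<noteq> m"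
  have xmA: "imp x m \<in> A" and joinA: "imp (imp m x) x \<in> A" and amA: "imp a m \<in> A"
    using imp_closed aA xA mA by simp_all
  have "a \<sqsubseteq> imp x m" using maximal[OF xmA below_imp[OF xA mA]] \<open>imp x m \<noteq> m\<close> .
  then have x_am: "x \<sqsubseteq> imp a m" using below_imp_iff[OF aA xA mA] by blast
  have "imp (imp m x) x \<noteq> m" using below_imp[OF imp_closed[OF mA xA] xA] x_m by auto
  then have a_join: "a \<sqsubseteq> imp (imp m x) x"
    using maximal[OF joinA below_imp_imp[OF mA xA]] by blast
  have "imp (imp m x) x \<sqsubseteq> imp a m"
    using join_least[OF mA xA amA below_imp[OF aA mA] x_am] .
  then have "a \<sqsubseteq> imp a m" using below_trans[OF aA joinA amA a_join] by blast
  then show False using imp_contract[OF aA mA] a_m unfolding below_def by simp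
qed

lemma bool_point_if_maximal:
  assumes aA: "a \<in> A" and mA: "m \<in> A" and a_m: "\<not> a \<sqsubseteq> m"
    and maximal: "\<And>z. z \<in> A \<Longrightarrow> m \<sqsubseteq> z \<Longrightarrow> z \<noteq> m \<Longrightarrow> a \<sqsubseteq> z"
  shows "bool_point m"
  unfolding bool_point_def
proof (intro conjI[OF mA] ballI iffI)
  fix x y assume xA: "x \<in> A" and yA: "y \<in> A" and xy_m: "imp x y \<sqsubseteq> m"
  have "y \<sqsubseteq> m" using below_trans[OF yA imp_closed[OF xA yA] mA below_imp[OF xA yA] xy_m] .
  moreover have "\<not> x \<sqsubseteq> m"
    using top_if_below_and_imp_below[OF xA yA mA _ xy_m] below_top[OF aA xA] a_m by auto
  ultimately show "\<not> x \<sqsubseteq> m \<and> y \<sqsubseteq> m" by blast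
next
  fix x y assume xA: "x \<in> A" and yA: "y \<in> A" and "\<not> x \<sqsubseteq> m \<and> y \<sqsubseteq> m"
  then have "imp x m = m" and "y \<sqsubseteq> m"
    using imp_eq_if_maximal[OF aA mA xA a_m maximal] by blast+
  then show "imp x y \<sqsubseteq> m" using imp_mono[OF yA mA xA] by simp
qed

lemma finite_has_below_maximal:
  assumes "finite A" and "S \<subseteq> A" and "b \<in> S"
  obtains m where "m \<in> S" and "\<And>z. z \<in> S \<Longrightarrow> m \<sqsubseteq> z \<Longrightarrow> z = m"
proof -
  define upset where "upset z = {w \<in> A. z \<sqsubseteq> w}" for z
  obtain m where mS: "m \<in> S" and least: "\<And>z. z \<in> S \<Longrightarrow> card (upset m) \<le> card (upset z)"
    using ex_has_least_nat[of "\<lambda>z. z \<in> S" b "\<lambda>z. card (upset z)"] \<open>b \<in> S\<close> by blast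
  have "z = m" if zS: "z \<in> S" and m_z: "m \<sqsubseteq> z" for z
  proof (rule ccontr)
    assume "z \<noteq> m"
    have "z \<in> A" "m \<in> A" using zS mS assms(2) by blast+
    then have "upset z \<subseteq> upset m" using below_trans[of m z] m_z unfolding upset_def by blast
    moreover have "m \<in> upset m - upset z"
      using below_antisym[of z m] below_refl \<open>z \<in> A\<close> \<open>m \<in> A\<close> m_z \<open>z \<noteq> m\<close>
      unfolding upset_def by blast
    ultimately have "upset z \<subset> upset m" by blast
    then have "card (upset z) < card (upset m)"
      using \<open>finite A\<close> by (intro psubset_card_mono) (simp_all add: upset_def)
    then show False using least[OF zS] by simp
  qed
  then show ?thesis using mS that by blast
qed

lemma exists_separating_bool_point:
  assumes "finite A" and aA: "a \<in> A" and bA: "b \<in> A" and "\<not> a \<sqsubseteq> b"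
  shows "\<exists>m. bool_point m \<and> \<not> a \<sqsubseteq> m \<and> b \<sqsubseteq> m"
proof -
  define S where "S = {z \<in> A. b \<sqsubseteq> z \<and> \<not> a \<sqsubseteq> z}"
  have "b \<in> S" using bA \<open>\<not> a \<sqsubseteq> b\<close> below_refl unfolding S_def by blast
  moreover have "S \<subseteq> A" unfolding S_def by blast
  ultimately obtain m where mS: "m \<in> S" and maximal: "\<And>z. z \<in> S \<Longrightarrow> m \<sqsubseteq> z \<Longrightarrow> z = m"
    using finite_has_below_maximal[OF \<open>finite A\<close>] by blast
  have mA: "m \<in> A" and b_m: "b \<sqsubseteq> m" and a_m: "\<not> a \<sqsubseteq> m"
    using mS unfolding S_def by blast+
  have "a \<sqsubseteq> z" if zA: "z \<in> A" and m_z: "m \<sqsubseteq> z" and "z \<noteq> m" for z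
  proof (rule ccontr)
    assume "\<not> a \<sqsubseteq> z"
    moreover have "b \<sqsubseteq> z" using below_trans[OF bA mA zA b_m m_z] .
    ultimately have "z \<in> S" using zA unfolding S_def by blast
    then show False using maximal m_z \<open>z \<noteq> m\<close> by blast
  qed
  then have "bool_point m" using bool_point_if_maximal[OF aA mA a_m] by blast
  then show ?thesis using a_m b_m by blast
qed

definition repr :: "'a \<Rightarrow> 'a set"
  where "repr x = {m. bool_point m \<and> \<not> x \<sqsubseteq> m}"

lemma repr_subset_bool_points: "repr x \<subseteq> Collect bool_point"
  unfolding repr_def by blast

lemma finite_bool_points: "finite A \<Longrightarrow> finite (Collect bool_point)"
  unfolding bool_point_def by simp

lemma repr_imp: "a \<in> A \<Longrightarrow> b \<in> A \<Longrightarrow> repr (imp a b) = (Collect bool_point - repr a) \<union> repr b"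
  unfolding repr_def bool_point_def by blast

lemma repr_subset_iff:
  assumes "finite A" and aA: "a \<in> A" and bA: "b \<in> A"
  shows "repr a \<subseteq> repr b \<longleftrightarrow> a \<sqsubseteq> b"
proof
  assume "repr a \<subseteq> repr b"
  then show "a \<sqsubseteq> b"
    using exists_separating_bool_point[OF assms] unfolding repr_def by blast
next
  assume "a \<sqsubseteq> b"
  then show "repr a \<subseteq> repr b"
    using below_trans[OF aA bA] unfolding repr_def bool_point_def by blast
qed

lemma inj_on_repr: "finite A \<Longrightarrow> inj_on repr A"
proof (rule inj_onI)
  fix a b assume "finite A" "a \<in> A" "b \<in> A" "repr a = repr b"
  then have "a \<sqsubseteq> b" and "b \<sqsubseteq> a" using repr_subset_iff by blast+
  then show "a = b" using below_antisym \<open>a \<in> A\<close> \<open>b \<in> A\<close> by blast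
qed

end

lemma has_finite_representationI:
  fixes h :: "'a \<Rightarrow> 'b set"
  assumes "finite P" and "inj_on h A" and h_P: "\<And>a. a \<in> A \<Longrightarrow> h a \<subseteq> P"
    and h_imp: "\<And>a b. a \<in> A \<Longrightarrow> b \<in> A \<Longrightarrow> h (imp a b) = (P - h a) \<union> h b"
  shows "has_finite_representation A imp"
proof -
  obtain g :: "'b \<Rightarrow> nat" where "inj_on g P"
    using finite_imp_inj_to_nat_seg[OF \<open>finite P\<close>] by blast
  define d where "d m = (g m, g m)" for m
  have d: "inj_on d P" using \<open>inj_on g P\<close> unfolding d_def inj_on_def by simp
  show ?thesis
    unfolding has_finite_representation_def
  proof (intro exI[of _ "g ` P"] exI[of _ "d ` P"] exI[of _ "\<lambda>a. d ` h a"] conjI ballI)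
    show "finite (g ` P)" using \<open>finite P\<close> by simp
    show "d ` P \<subseteq> g ` P \<times> g ` P" unfolding d_def by auto
    show "d ` h a \<subseteq> d ` P" if "a \<in> A" for a using h_P[OF that] by blast
    show "inj_on (\<lambda>a. d ` h a) A"
    proof (rule inj_onI)
      fix a b assume aA: "a \<in> A" and bA: "b \<in> A" and "d ` h a = d ` h b"
      then have "h a = h b" using inj_on_image_eq_iff[OF d h_P[OF aA] h_P[OF bA]] by blast
      then show "a = b" using inj_onD[OF \<open>inj_on h A\<close> _ aA bA] by blast
    qed
    show "d ` h (imp a b) = (d ` P - d ` h a) \<union> d ` h b" if "a \<in> A" "b \<in> A" for a b
    proof -
      have "d ` h (imp a b) = d ` (P - h a) \<union> d ` h b" unfolding h_imp[OF that] by (rule image_Un)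
      also have "d ` (P - h a) = d ` P - d ` h a"
        using inj_on_image_set_diff[OF d _ h_P[OF that(1)]] by blast
      finally show ?thesis .
    qed
  qed
qed

theorem corollary4:
  fixes A :: "'a set" and imp :: "'a \<Rightarrow> 'a \<Rightarrow> 'a"
  assumes "implication_algebra A imp" and "finite A"
  shows "has_finite_representation A imp"
proof -
  interpret imp_algebra A imp
    using assms(1) unfolding implication_algebra_def by unfold_locales blast+
  show ?thesis
  proof (rule has_finite_representationI)
    show "finite (Collect bool_point)" using assms(2) by (rule finite_bool_points)
    show "inj_on repr A" using assms(2) by (rule inj_on_repr)
  qed (simp_all add: repr_subset_bool_points repr_imp)
qed

end
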